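(* Let $\mathcal{C}$ be a class of finite reflexive digraphs for which there is a natural number $N$ such that every set of disjoint partial pairs in every member of $\mathcal{C}$ has size at most $N$. Then $\mathcal{C}$ is well quasi-ordered under the standard and under the strong homomorphic image orderings.
   Context: A digraph is a set $D$ with a binary relation $E(D)\subseteq D\times D$; it is reflexive if every loop $(x,x)$ is an edge. A pair of vertices $a,b$ is partial if $a\neq b$ and not both $(a,b)$ and $(b,a)$ are edges. Partial pairs $(a_1,b_1),\dots,(a_k,b_k)$ are disjoint if $a_1,\dots,a_k,b_1,\dots,b_k$ are all distinct. A homomorphism maps edges to edges; it is strong if additionally every edge of the target between vertices of the image is the image of an edge. Standard homomorphic image ordering: $A\preceq B$ iff there is a surjective homomorphism $B\to A$; strong: iff there is a surjective strong homomorphism $B\to A$. Well quasi-ordered means no infinite strictly decreasing sequence and no infinite antichain; digraphs considered up to isomorphism. *)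

theory Defs
  imports Main
begin

type_synonym 'a digraph = "'a set \<times> ('a \<times> 'a) set"

definition verts :: "'a digraph \<Rightarrow> 'a set" where "verts D = fst D"
definition edges :: "'a digraph \<Rightarrow> ('a \<times> 'a) set" where "edges D = snd D"

definition digraph :: "'a digraph \<Rightarrow> bool" where
  "digraph D \<longleftrightarrow> edges D \<subseteq> verts D \<times> verts D"

definition finite_digraph :: "'a digraph \<Rightarrow> bool" where
  "finite_digraph D \<longleftrightarrow> digraph D \<and> finite (verts D)"

definition reflexive_digraph :: "'a digraph \<Rightarrow> bool" where
  "reflexive_digraph D \<longleftrightarrow> digraph D \<and> (\<forall>x\<in>verts D. (x, x) \<in> edges D)"

definition partial_pair :: "'a digraph \<Rightarrow> 'a \<Rightarrow> 'a \<Rightarrow> bool" where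
  "partial_pair D a b \<longleftrightarrow> a \<in> verts D \<and> b \<in> verts D \<and> a \<noteq> b \<and>
     \<not> ((a, b) \<in> edges D \<and> (b, a) \<in> edges D)"

definition disjoint_partial_pairs :: "'a digraph \<Rightarrow> ('a \<times> 'a) set \<Rightarrow> bool" where
  "disjoint_partial_pairs D P \<longleftrightarrow>
     (\<forall>(a, b)\<in>P. partial_pair D a b) \<and>
     (\<forall>(a, b)\<in>P. \<forall>(c, d)\<in>P. (a, b) \<noteq> (c, d) \<longrightarrow> {a, b} \<inter> {c, d} = {})"

definition hom :: "'a digraph \<Rightarrow> 'a digraph \<Rightarrow> ('a \<Rightarrow> 'a) \<Rightarrow> bool" where
  "hom G H f \<longleftrightarrow> f ` verts G \<subseteq> verts H \<and>
     (\<forall>(x, y)\<in>edges G. (f x, f y) \<in> edges H)"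

definition strong_hom :: "'a digraph \<Rightarrow> 'a digraph \<Rightarrow> ('a \<Rightarrow> 'a) \<Rightarrow> bool" where
  "strong_hom G H f \<longleftrightarrow> hom G H f \<and>
     (\<forall>u v. (u, v) \<in> edges H \<and> u \<in> f ` verts G \<and> v \<in> f ` verts G \<longrightarrow>
        (\<exists>x y. (x, y) \<in> edges G \<and> f x = u \<and> f y = v))"

definition hom_image_le :: "'a digraph \<Rightarrow> 'a digraph \<Rightarrow> bool" where
  "hom_image_le A B \<longleftrightarrow> (\<exists>f. hom B A f \<and> f ` verts B = verts A)"

definition strong_hom_image_le :: "'a digraph \<Rightarrow> 'a digraph \<Rightarrow> bool" where
  "strong_hom_image_le A B \<longleftrightarrow> (\<exists>f. strong_hom B A f \<and> f ` verts B = verts A)"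

definition well_quasi_ordered_on :: "('b \<Rightarrow> 'b \<Rightarrow> bool) \<Rightarrow> 'b set \<Rightarrow> bool" where
  "well_quasi_ordered_on le C \<longleftrightarrow>
     \<not> (\<exists>s. (\<forall>i. s i \<in> C) \<and> (\<forall>i. le (s (Suc i)) (s i) \<and> \<not> le (s i) (s (Suc i)))) \<and>
     \<not> (\<exists>s. (\<forall>i. s i \<in> C) \<and> (\<forall>(i::nat) j. i \<noteq> j \<longrightarrow> \<not> le (s i) (s j)))"

end

theory Submission
  imports Defs "HOL-Library.Ramsey"
begin

text \<open>
  Take a maximal set of disjoint partial pairs in a member D of the class: it has at most N pairs,
  and any two vertices outside its at most 2N endpoints are joined in both directions. So D is a
  bounded enumerated part together with a complete part K, and a vertex of K matters only through
  its type: the sets of enumerated vertices it receives edges from and sends edges to. Suppose A and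
  B have the same enumerated part, every type occurring in K of B occurs in K of A, and each type
  occurs in B at least as often as in A. Then the map that is the identity on the enumerated part
  and sends K of B onto K of A preserving types is a surjective strong homomorphism B \<rightarrow> A.
  Ramsey's theorem, in the form of Dickson's lemma for the finitely many type counts, finds such a
  pair in every infinite sequence, which excludes infinite antichains. Strictly descending chains
  are excluded because a surjective homomorphism that is not reversed by a strong one either loses
  vertices or, being bijective, gains edges.
\<close>

lemma dickson_on_infinite_set:
  fixes Y :: "nat set" and c :: "nat \<Rightarrow> 't \<Rightarrow> nat"
  assumes "finite T" and "infinite Y"
  obtains i j where "i \<in> Y" "j \<in> Y" "i < j" "\<forall>t\<in>T. c i t \<le> c j t"
proof -
  (* Colour a pair by the coordinates that do not decrease. On an infinite homogeneous set
     that colour must be all of T, because no coordinate can decrease forever. *)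
  define col where "col i j = {t\<in>T. c i t \<le> c j t}" for i j
  obtain h where h: "bij_betw h (Pow T) {..<card (Pow T)}"
    using ex_bij_betw_finite_nat \<open>finite T\<close> by (metis atLeast0LessThan finite_Pow_iff)
  have col_Pow: "col i j \<in> Pow T" for i j by (auto simp: col_def)
  define colour where "colour X = h (col (Min X) (Max X))" for X
  have "\<forall>x\<in>Y. \<forall>y\<in>Y. x \<noteq> y \<longrightarrow> colour {x, y} < card (Pow T)"
    using bij_betw_apply[OF h col_Pow] by (simp add: colour_def)
  from Ramsey2[OF \<open>infinite Y\<close> this] obtain Z k where Z: "Z \<subseteq> Y" "infinite Z"
    and hom: "\<forall>x\<in>Z. \<forall>y\<in>Z. x \<noteq> y \<longrightarrow> colour {x, y} = k"
    by blast
  have col_const: "col x y = col x' y'"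
    if "x \<in> Z" "y \<in> Z" "x < y" "x' \<in> Z" "y' \<in> Z" "x' < y'" for x y x' y'
  proof -
    have "colour {x, y} = colour {x', y'}" using hom that by auto
    moreover have "Min {x, y} = x" "Max {x, y} = y" "Min {x', y'} = x'" "Max {x', y'} = y'"
      using that by auto
    ultimately have "h (col x y) = h (col x' y')" by (simp add: colour_def)
    then show ?thesis using bij_betw_imp_inj_on[OF h] col_Pow by (auto dest: inj_onD)
  qed
  obtain x0 x1 where x01: "x0 \<in> Z" "x1 \<in> Z" "x0 < x1"
    using \<open>infinite Z\<close> by (metis infinite_nat_iff_unbounded)
  have "col x0 x1 = T"
  proof (rule ccontr)
    assume "col x0 x1 \<noteq> T"
    then obtain t where t: "t \<in> T" "t \<notin> col x0 x1" by (auto simp: col_def)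
    have decreasing: "c y t < c x t" if "x \<in> Z" "y \<in> Z" "x < y" for x y
    proof -
      have "t \<notin> col x y" using col_const[OF that x01] t(2) by simp
      then show ?thesis using t(1) by (simp add: col_def)
    qed
    obtain z where "z \<in> Z" and z_min: "\<forall>y\<in>Z. c z t \<le> c y t"
      using ex_has_least_nat[of "\<lambda>y. y \<in> Z" x0 "\<lambda>y. c y t"] x01 by blast
    obtain z' where "z' \<in> Z" "z < z'" using \<open>infinite Z\<close> by (metis infinite_nat_iff_unbounded)
    then show False using decreasing[OF \<open>z \<in> Z\<close>] z_min by (meson not_le)
  qed
  then have "\<forall>t\<in>T. c x0 t \<le> c x1 t" by (auto simp: col_def)
  then show ?thesis using that x01 Z by blast
qed

lemma ex_pair_same_key_counts_le:
  fixes key :: "nat \<Rightarrow> 'k" and c :: "nat \<Rightarrow> 't \<Rightarrow> nat"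
  assumes "finite (range key)" and "finite T"
  obtains i j where "i < j" "key i = key j" "\<forall>t\<in>T. c i t \<le> c j t"
proof -
  obtain k where "infinite (key -` {k})"
    using inf_img_fin_domE[OF assms(1) infinite_UNIV_nat] by blast
  then obtain i j where "i \<in> key -` {k}" "j \<in> key -` {k}" "i < j" "\<forall>t\<in>T. c i t \<le> c j t"
    using dickson_on_infinite_set[OF \<open>finite T\<close>] by metis
  then show ?thesis using that by simp
qed

lemma ex_onto_if_card_le:
  assumes "finite X" and "finite Y" and "card Y \<le> card X" and "Y = {} \<Longrightarrow> X = {}"
  obtains g where "g ` X = Y"
proof (cases "Y = {}")
  case True
  then show ?thesis using assms(4) that by simp
next
  case False
  then obtain y0 where "y0 \<in> Y" by blast
  obtain h where "inj_on h Y" "h ` Y \<subseteq> X"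
    using card_le_inj[OF assms(2,1,3)] by blast
  define g where "g x = (if x \<in> h ` Y then inv_into Y h x else y0)" for x
  have "g ` X = Y"
  proof
    show "g ` X \<subseteq> Y" using \<open>y0 \<in> Y\<close> by (auto simp: g_def inv_into_into)
    show "Y \<subseteq> g ` X"
    proof
      fix y assume "y \<in> Y"
      then have "g (h y) = y" "h y \<in> X"
        using \<open>inj_on h Y\<close> \<open>h ` Y \<subseteq> X\<close> by (auto simp: g_def)
      then show "y \<in> g ` X" by force
    qed
  qed
  then show ?thesis by (rule that)
qed

lemma ex_fibrewise_onto:
  fixes \<tau>1 :: "'a \<Rightarrow> 't" and \<tau>2 :: "'b \<Rightarrow> 't"
  assumes "finite X1" and "finite X2"
    and counts: "\<And>t. t \<in> \<tau>1 ` X1 \<Longrightarrow> card {x\<in>X1. \<tau>1 x = t} \<le> card {x\<in>X2. \<tau>2 x = t}"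
    and support: "\<tau>2 ` X2 \<subseteq> \<tau>1 ` X1"
  obtains g where "g ` X2 = X1" and "\<And>x. x \<in> X2 \<Longrightarrow> \<tau>1 (g x) = \<tau>2 x"
proof -
  define fibre1 where "fibre1 t = {x\<in>X1. \<tau>1 x = t}" for t
  define fibre2 where "fibre2 t = {x\<in>X2. \<tau>2 x = t}" for t
  have "\<exists>g. g ` fibre2 t = fibre1 t" for t
  proof -
    have "finite (fibre2 t)" "finite (fibre1 t)"
      using assms(1,2) by (simp_all add: fibre1_def fibre2_def)
    moreover have "card (fibre1 t) \<le> card (fibre2 t)"
    proof (cases "t \<in> \<tau>1 ` X1")
      case True
      then show ?thesis using counts by (simp add: fibre1_def fibre2_def)
    next
      case False
      then have "fibre1 t = {}" by (auto simp: fibre1_def)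
      then show ?thesis by simp
    qed
    moreover have "fibre1 t = {} \<Longrightarrow> fibre2 t = {}"
      using support by (fastforce simp: fibre1_def fibre2_def)
    ultimately obtain g where "g ` fibre2 t = fibre1 t" by (rule ex_onto_if_card_le)
    then show ?thesis by blast
  qed
  then obtain gs where gs: "\<And>t. gs t ` fibre2 t = fibre1 t" by metis
  define g where "g x = gs (\<tau>2 x) x" for x
  have g_fibre: "g x \<in> fibre1 (\<tau>2 x)" if "x \<in> X2" for x
    using that gs[of "\<tau>2 x"] by (force simp: g_def fibre2_def)
  show ?thesis
  proof
    show "g ` X2 = X1"
    proof
      show "g ` X2 \<subseteq> X1" using g_fibre by (auto simp: fibre1_def)
      show "X1 \<subseteq> g ` X2"
      proof
        fix v assume "v \<in> X1"
        then have "v \<in> gs (\<tau>1 v) ` fibre2 (\<tau>1 v)" using gs by (simp add: fibre1_def)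
        then obtain x where "x \<in> X2" "\<tau>2 x = \<tau>1 v" "v = gs (\<tau>1 v) x"
          by (auto simp: fibre2_def)
        then show "v \<in> g ` X2" by (metis g_def image_eqI)
      qed
    qed
    show "\<tau>1 (g x) = \<tau>2 x" if "x \<in> X2" for x
      using g_fibre[OF that] by (simp add: fibre1_def)
  qed
qed

lemma strong_hom_image_le_imp_hom_image_le:
  "strong_hom_image_le A B \<Longrightarrow> hom_image_le A B"
  unfolding strong_hom_image_le_def hom_image_le_def strong_hom_def by blast

lemma strong_hom_image_leI:
  assumes "digraph B" and "f ` verts B = verts A"
    and edge_iff: "\<And>x y. x \<in> verts B \<Longrightarrow> y \<in> verts B \<Longrightarrow>
      (f x, f y) \<in> edges A \<longleftrightarrow> (x, y) \<in> edges B"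
  shows "strong_hom_image_le A B"
proof -
  have "hom B A f"
    using assms by (fastforce simp: hom_def digraph_def)
  moreover have "\<exists>x y. (x, y) \<in> edges B \<and> f x = u \<and> f y = v"
    if "(u, v) \<in> edges A" "u \<in> f ` verts B" "v \<in> f ` verts B" for u v
    using that edge_iff by blast
  ultimately show ?thesis
    unfolding strong_hom_image_le_def strong_hom_def using assms(2) by blast
qed

lemma strong_hom_image_le_converse_if_card_eq:
  assumes hom: "hom B A f" and onto: "f ` verts B = verts A"
    and "finite (verts B)" and "digraph A" and "digraph B"
    and card_verts: "card (verts A) = card (verts B)"
    and card_edges: "card (edges A) \<le> card (edges B)"
  shows "strong_hom_image_le B A"
proof -
  have inj: "inj_on f (verts B)"
    using card_verts onto \<open>finite (verts B)\<close> by (metis eq_card_imp_inj_on)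
  define F where "F = (\<lambda>(x, y). (f x, f y))"
  have EB: "edges B \<subseteq> verts B \<times> verts B" and EA: "edges A \<subseteq> verts A \<times> verts A"
    using \<open>digraph A\<close> \<open>digraph B\<close> by (simp_all add: digraph_def)
  have "finite (edges A)"
    using EA onto \<open>finite (verts B)\<close> by (metis finite_SigmaI finite_imageI finite_subset)
  moreover have "card (F ` edges B) = card (edges B)"
    using inj EB by (intro card_image) (auto simp: F_def inj_on_def dest: inj_onD)
  moreover have "F ` edges B \<subseteq> edges A"
    using hom by (auto simp: hom_def F_def)
  ultimately have edges_A: "edges A = F ` edges B"
    using card_edges by (metis card_seteq)
  define g where "g = inv_into (verts B) f"
  have g_f: "g (f x) = x" if "x \<in> verts B" for x
    using inj that by (simp add: g_def)
  have edge_iff: "(f x, f y) \<in> edges A \<longleftrightarrow> (x, y) \<in> edges B"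
    if "x \<in> verts B" "y \<in> verts B" for x y
  proof
    assume "(f x, f y) \<in> edges A"
    then obtain x' y' where "(x', y') \<in> edges B" "f x' = f x" "f y' = f y"
      using edges_A by (auto simp: F_def)
    then show "(x, y) \<in> edges B"
      using EB that inj by (auto dest: inj_onD)
  qed (use edges_A in \<open>auto simp: F_def\<close>)
  show ?thesis
  proof (rule strong_hom_image_leI[OF \<open>digraph A\<close>])
    show "g ` verts A = verts B"
      using onto inj by (metis g_def inv_into_image_cancel order_refl)
    fix u v assume "u \<in> verts A" "v \<in> verts A"
    then obtain x y where "x \<in> verts B" "y \<in> verts B" "u = f x" "v = f y"
      using onto by blast
    then show "(g u, g v) \<in> edges B \<longleftrightarrow> (u, v) \<in> edges A"
      using edge_iff g_f by simp
  qed
qed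

definition verts_nonedges_count :: "'a digraph \<Rightarrow> nat \<times> nat" where
  "verts_nonedges_count D = (card (verts D), card (verts D) * card (verts D) - card (edges D))"

lemma verts_nonedges_count_decreases:
  assumes "hom_image_le A B" and "\<not> strong_hom_image_le B A"
    and "finite_digraph B" and "digraph A"
  shows "(verts_nonedges_count A, verts_nonedges_count B) \<in> less_than <*lex*> less_than"
proof -
  obtain f where hom: "hom B A f" and onto: "f ` verts B = verts A"
    using assms(1) by (auto simp: hom_image_le_def)
  have "finite (verts B)" "digraph B"
    using \<open>finite_digraph B\<close> by (simp_all add: finite_digraph_def)
  then have "finite (verts A)" using onto by (metis finite_imageI)
  have card_le: "card (verts A) \<le> card (verts B)"
    using onto \<open>finite (verts B)\<close> by (metis card_image_le)
  show ?thesis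
  proof (cases "card (verts A) = card (verts B)")
    case True
    then have "card (edges B) < card (edges A)"
      using strong_hom_image_le_converse_if_card_eq[OF hom onto \<open>finite (verts B)\<close>
          \<open>digraph A\<close> \<open>digraph B\<close>] assms(2) by linarith
    moreover have "card (edges A) \<le> card (verts A) * card (verts A)"
      using \<open>digraph A\<close> \<open>finite (verts A)\<close>
      by (metis card_cartesian_product card_mono digraph_def finite_cartesian_product)
    ultimately have "card (verts A) * card (verts A) - card (edges A)
        < card (verts A) * card (verts A) - card (edges B)"
      by linarith
    then show ?thesis
      using True by (simp add: verts_nonedges_count_def)
  next
    case False
    then show ?thesis using card_le by (simp add: verts_nonedges_count_def)
  qed
qed

lemma no_infinite_descending_chain:
  assumes le_hom: "\<And>A B. le A B \<Longrightarrow> hom_image_le A B"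
    and strong_le: "\<And>A B. strong_hom_image_le A B \<Longrightarrow> le A B"
    and "\<forall>D\<in>C. finite_digraph D"
  shows "\<not> (\<exists>s. (\<forall>i. s i \<in> C) \<and> (\<forall>i. le (s (Suc i)) (s i) \<and> \<not> le (s i) (s (Suc i))))"
proof
  assume "\<exists>s. (\<forall>i. s i \<in> C) \<and> (\<forall>i. le (s (Suc i)) (s i) \<and> \<not> le (s i) (s (Suc i)))"
  then obtain s where "\<forall>i. s i \<in> C" and desc: "\<forall>i. le (s (Suc i)) (s i) \<and> \<not> le (s i) (s (Suc i))"
    by blast
  then have fin: "finite_digraph (s i)" for i using assms(3) by blast
  have decreasing:
    "(verts_nonedges_count (s (Suc i)), verts_nonedges_count (s i)) \<in> less_than <*lex*> less_than"
    for i
  proof (rule verts_nonedges_count_decreases)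
    show "hom_image_le (s (Suc i)) (s i)" using desc le_hom by simp
    show "\<not> strong_hom_image_le (s i) (s (Suc i))" using desc strong_le by metis
    show "finite_digraph (s i)" "digraph (s (Suc i))"
      using fin by (simp_all add: finite_digraph_def)
  qed
  have "wf (less_than <*lex*> less_than)" by (intro wf_lex_prod wf_less_than)
  moreover have "\<forall>i. ((verts_nonedges_count \<circ> s) (Suc i), (verts_nonedges_count \<circ> s) i)
      \<in> less_than <*lex*> less_than"
    using decreasing by simp
  ultimately show False
    unfolding wf_iff_no_infinite_down_chain by blast
qed

lemma disjoint_partial_pairsI:
  assumes "\<And>a b. (a, b) \<in> P \<Longrightarrow> partial_pair D a b"
    and "\<And>a b c d. (a, b) \<in> P \<Longrightarrow> (c, d) \<in> P \<Longrightarrow> (a, b) \<noteq> (c, d) \<Longrightarrow> {a, b} \<inter> {c, d} = {}"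
  shows "disjoint_partial_pairs D P"
  using assms unfolding disjoint_partial_pairs_def by blast

lemma disjoint_partial_pairsD:
  assumes "disjoint_partial_pairs D P"
  shows disjoint_partial_pairs_partial: "(a, b) \<in> P \<Longrightarrow> partial_pair D a b"
    and disjoint_partial_pairs_disjoint:
      "(a, b) \<in> P \<Longrightarrow> (c, d) \<in> P \<Longrightarrow> (a, b) \<noteq> (c, d) \<Longrightarrow> {a, b} \<inter> {c, d} = {}"
  using assms unfolding disjoint_partial_pairs_def by fast+

lemma disjoint_partial_pairs_subset:
  "disjoint_partial_pairs D P \<Longrightarrow> P \<subseteq> verts D \<times> verts D"
  by (auto simp: partial_pair_def dest: disjoint_partial_pairs_partial)

lemma disjoint_partial_pairs_insert:
  assumes P: "disjoint_partial_pairs D P" and "partial_pair D a b"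
    and "a \<notin> fst ` P \<union> snd ` P" and "b \<notin> fst ` P \<union> snd ` P"
  shows "disjoint_partial_pairs D (insert (a, b) P)"
proof (rule disjoint_partial_pairsI)
  have fresh: "{a, b} \<inter> {c, d} = {}" "{c, d} \<inter> {a, b} = {}" if "(c, d) \<in> P" for c d
    using that assms(3,4) by (auto simp: image_iff)
  show "{p, q} \<inter> {r, t} = {}"
    if pq: "(p, q) \<in> insert (a, b) P" and rt: "(r, t) \<in> insert (a, b) P"
      and ne: "(p, q) \<noteq> (r, t)" for p q r t
  proof (cases "(p, q) = (a, b)")
    case True
    then show ?thesis using rt ne fresh(1)[of r t] by auto
  next
    case False
    then have "(p, q) \<in> P" using pq by auto
    show ?thesis
    proof (cases "(r, t) = (a, b)")
      case True
      then show ?thesis using fresh(2)[OF \<open>(p, q) \<in> P\<close>] by simp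
    next
      case False
      then have "(r, t) \<in> P" using rt by auto
      then show ?thesis
        using disjoint_partial_pairs_disjoint[OF P \<open>(p, q) \<in> P\<close>] ne by blast
    qed
  qed
  show "partial_pair D p q" if "(p, q) \<in> insert (a, b) P" for p q
    using that \<open>partial_pair D a b\<close> disjoint_partial_pairs_partial[OF P] by auto
qed

definition clique_split :: "'a digraph \<Rightarrow> (nat \<Rightarrow> 'a) \<Rightarrow> nat \<Rightarrow> 'a set \<Rightarrow> bool" where
  "clique_split D e m K \<longleftrightarrow> K \<subseteq> verts D \<and> bij_betw e {..<m} (verts D - K) \<and>
     (\<forall>x\<in>K. \<forall>y\<in>K. (x, y) \<in> edges D)"

lemma ex_clique_split:
  assumes "finite_digraph D" and "reflexive_digraph D"
    and bound: "\<forall>P. disjoint_partial_pairs D P \<longrightarrow> card P \<le> N"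
  obtains e m K where "m \<le> 2 * N" and "clique_split D e m K"
proof -
  have "disjoint_partial_pairs D {}" by (simp add: disjoint_partial_pairs_def)
  then have "\<exists>P. disjoint_partial_pairs D P \<and> card P = 0" by auto
  moreover have "\<forall>n. (\<exists>P. disjoint_partial_pairs D P \<and> card P = n) \<longrightarrow> n \<le> N"
    using bound by auto
  ultimately have "\<exists>n. (\<exists>P. disjoint_partial_pairs D P \<and> card P = n) \<and>
      (\<forall>n'. (\<exists>P. disjoint_partial_pairs D P \<and> card P = n') \<longrightarrow> n' \<le> n)"
    by (rule Nat.ex_has_greatest_nat)
  then obtain P where P: "disjoint_partial_pairs D P"
    and P_max: "\<And>Q. disjoint_partial_pairs D Q \<Longrightarrow> card Q \<le> card P"
    by blast
  have "finite (verts D)" using \<open>finite_digraph D\<close> by (simp add: finite_digraph_def)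
  then have "finite P"
    using disjoint_partial_pairs_subset[OF P] by (meson finite_SigmaI finite_subset)
  define S where "S = fst ` P \<union> snd ` P"
  have "S \<subseteq> verts D" using disjoint_partial_pairs_subset[OF P] by (auto simp: S_def)
  have "card S \<le> card P + card P"
    unfolding S_def using \<open>finite P\<close> by (meson add_mono card_Un_le card_image_le order_trans)
  then have "card S \<le> 2 * N" using bound P by fastforce
  obtain e where e: "bij_betw e {..<card S} S"
    using ex_bij_betw_nat_finite[of S] \<open>S \<subseteq> verts D\<close> \<open>finite (verts D)\<close>
    by (metis atLeast0LessThan finite_subset)
  have "(x, y) \<in> edges D" if "x \<in> verts D - S" "y \<in> verts D - S" for x y
  proof (rule ccontr)
    assume "(x, y) \<notin> edges D"
    then have "partial_pair D x y"
      using that \<open>reflexive_digraph D\<close> unfolding partial_pair_def reflexive_digraph_def by blast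
    then have "disjoint_partial_pairs D (insert (x, y) P)"
      using disjoint_partial_pairs_insert[OF P] that unfolding S_def by blast
    moreover have "(x, y) \<notin> P" using that unfolding S_def by force
    ultimately show False
      using P_max[of "insert (x, y) P"] \<open>finite P\<close> by simp
  qed
  then have "clique_split D e (card S) (verts D - S)"
    using e \<open>S \<subseteq> verts D\<close> by (simp add: clique_split_def Diff_Diff_Int Int_absorb1)
  with \<open>card S \<le> 2 * N\<close> show ?thesis by (rule that)
qed

lemma verts_clique_split:
  "clique_split D e m K \<Longrightarrow> verts D = e ` {..<m} \<union> K"
  unfolding clique_split_def bij_betw_def by blast

definition nbr_type :: "'a digraph \<Rightarrow> (nat \<Rightarrow> 'a) \<Rightarrow> nat \<Rightarrow> 'a \<Rightarrow> nat set \<times> nat set" where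
  "nbr_type D e m v = ({k. k < m \<and> (e k, v) \<in> edges D}, {k. k < m \<and> (v, e k) \<in> edges D})"

lemma edge_iff_nbr_type:
  assumes "k < m"
  shows edge_to_iff_nbr_type: "(e k, v) \<in> edges D \<longleftrightarrow> k \<in> fst (nbr_type D e m v)"
    and edge_from_iff_nbr_type: "(v, e k) \<in> edges D \<longleftrightarrow> k \<in> snd (nbr_type D e m v)"
  using assms by (simp_all add: nbr_type_def)

lemma edge_iff_if_preserves_clique_split:
  assumes A: "clique_split A e1 m K1" and B: "clique_split B e2 m K2"
    and skeleton: "\<And>k l. k < m \<Longrightarrow> l < m \<Longrightarrow> (e1 k, e1 l) \<in> edges A \<longleftrightarrow> (e2 k, e2 l) \<in> edges B"
    and f_enum: "\<And>k. k < m \<Longrightarrow> f (e2 k) = e1 k"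
    and f_clique: "\<And>x. x \<in> K2 \<Longrightarrow> f x \<in> K1 \<and> nbr_type A e1 m (f x) = nbr_type B e2 m x"
    and "x \<in> verts B" and "y \<in> verts B"
  shows "(f x, f y) \<in> edges A \<longleftrightarrow> (x, y) \<in> edges B"
proof -
  have complete: "\<And>u v. u \<in> K1 \<Longrightarrow> v \<in> K1 \<Longrightarrow> (u, v) \<in> edges A"
    "\<And>u v. u \<in> K2 \<Longrightarrow> v \<in> K2 \<Longrightarrow> (u, v) \<in> edges B"
    using A B by (auto simp: clique_split_def)
  consider "x \<in> K2" "y \<in> K2" | l where "x \<in> K2" "l < m" "y = e2 l"
    | k where "k < m" "x = e2 k" "y \<in> K2" | k l where "k < m" "x = e2 k" "l < m" "y = e2 l"
    using verts_clique_split[OF B] \<open>x \<in> verts B\<close> \<open>y \<in> verts B\<close> by blast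
  then show ?thesis
  proof cases
    case 1
    then show ?thesis using f_clique complete by blast
  next
    case (2 l)
    then show ?thesis
      using f_clique[of x] f_enum[of l] by (simp add: edge_from_iff_nbr_type)
  next
    case (3 k)
    then show ?thesis
      using f_clique[of y] f_enum[of k] by (simp add: edge_to_iff_nbr_type)
  next
    case (4 k l)
    then show ?thesis using skeleton f_enum by simp
  qed
qed

lemma strong_hom_image_le_if_nbr_types_dominate:
  assumes A: "clique_split A e1 m K1" and B: "clique_split B e2 m K2"
    and "finite (verts A)" and "finite (verts B)" and "digraph B"
    and skeleton: "\<And>k l. k < m \<Longrightarrow> l < m \<Longrightarrow> (e1 k, e1 l) \<in> edges A \<longleftrightarrow> (e2 k, e2 l) \<in> edges B"
    and counts: "\<And>t. t \<in> nbr_type A e1 m ` K1 \<Longrightarrow>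
      card {v\<in>K1. nbr_type A e1 m v = t} \<le> card {v\<in>K2. nbr_type B e2 m v = t}"
    and support: "nbr_type B e2 m ` K2 \<subseteq> nbr_type A e1 m ` K1"
  shows "strong_hom_image_le A B"
proof -
  have "finite K1" "finite K2"
    using A B \<open>finite (verts A)\<close> \<open>finite (verts B)\<close> by (auto simp: clique_split_def intro: finite_subset)
  then obtain g where g_onto: "g ` K2 = K1"
    and g_type: "\<And>x. x \<in> K2 \<Longrightarrow> nbr_type A e1 m (g x) = nbr_type B e2 m x"
    using ex_fibrewise_onto[OF _ _ counts support] by metis
  define f where "f x = (if x \<in> K2 then g x else e1 (inv_into {..<m} e2 x))" for x
  have e2: "bij_betw e2 {..<m} (verts B - K2)" using B by (simp add: clique_split_def)
  have f_enum: "f (e2 k) = e1 k" if "k < m" for k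
  proof -
    have "e2 k \<notin> K2" using bij_betw_apply[OF e2] that by simp
    then show ?thesis using bij_betw_imp_inj_on[OF e2] that by (simp add: f_def)
  qed
  have f_clique: "f x \<in> K1 \<and> nbr_type A e1 m (f x) = nbr_type B e2 m x" if "x \<in> K2" for x
    using that g_onto g_type by (auto simp: f_def)
  have onto: "f ` verts B = verts A"
  proof -
    have "f ` verts B = f ` e2 ` {..<m} \<union> f ` K2"
      using verts_clique_split[OF B] by (simp add: image_Un)
    also have "\<dots> = e1 ` {..<m} \<union> K1"
    proof -
      have "f ` e2 ` {..<m} = e1 ` {..<m}" using f_enum by (simp add: image_image)
      moreover have "f ` K2 = K1" using g_onto by (simp add: f_def)
      ultimately show ?thesis by simp
    qed
    also have "\<dots> = verts A" using verts_clique_split[OF A] by simp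
    finally show ?thesis .
  qed
  show ?thesis
  proof (rule strong_hom_image_leI[OF \<open>digraph B\<close> onto])
    fix x y assume "x \<in> verts B" "y \<in> verts B"
    then show "(f x, f y) \<in> edges A \<longleftrightarrow> (x, y) \<in> edges B"
      using edge_iff_if_preserves_clique_split[OF A B skeleton f_enum f_clique] by blast
  qed
qed

lemma ex_strong_hom_image_le_pair:
  fixes s :: "nat \<Rightarrow> 'a digraph"
  assumes C: "\<forall>D\<in>C. finite_digraph D \<and> reflexive_digraph D"
    and bound: "\<forall>D\<in>C. \<forall>P. disjoint_partial_pairs D P \<longrightarrow> card P \<le> N"
    and "\<forall>i. s i \<in> C"
  obtains i j where "i < j" and "strong_hom_image_le (s i) (s j)"
proof -
  have "\<exists>e m K. m \<le> 2 * N \<and> clique_split (s i) e m K" for i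
    using ex_clique_split C bound \<open>\<forall>i. s i \<in> C\<close> by metis
  then obtain e m K where m_le: "\<And>i. m i \<le> 2 * N"
    and split: "\<And>i. clique_split (s i) (e i) (m i) (K i)"
    by metis
  define type where "type i = nbr_type (s i) (e i) (m i)" for i
  define skeleton where "skeleton i = {(k, l). k < m i \<and> l < m i \<and> (e i k, e i l) \<in> edges (s i)}" for i
  define T where "T = Pow {..<2 * N} \<times> Pow {..<2 * N}"
  have type_T: "type i v \<in> T" for i v
    using m_le[of i] by (auto simp: type_def nbr_type_def T_def)
  define key where "key i = (m i, skeleton i, type i ` K i)" for i
  have "key i \<in> {..2 * N} \<times> Pow ({..<2 * N} \<times> {..<2 * N}) \<times> Pow T" for i
    using m_le[of i] type_T[of i] by (auto simp: key_def skeleton_def)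
  then have "range key \<subseteq> {..2 * N} \<times> Pow ({..<2 * N} \<times> {..<2 * N}) \<times> Pow T"
    by blast
  then have "finite (range key)" by (rule finite_subset) (simp add: T_def)
  moreover have "finite T" by (simp add: T_def)
  ultimately obtain i j where "i < j" "key i = key j"
    and counts: "\<forall>t\<in>T. card {v\<in>K i. type i v = t} \<le> card {v\<in>K j. type j v = t}"
    by (rule ex_pair_same_key_counts_le[where c = "\<lambda>i t. card {v\<in>K i. type i v = t}"])
  then have "m j = m i" and same_skeleton: "skeleton i = skeleton j"
    and same_support: "type j ` K j = type i ` K i"
    by (simp_all add: key_def)
  have fin: "finite_digraph (s i)" "finite_digraph (s j)"
    using C \<open>\<forall>i. s i \<in> C\<close> by auto
  have "strong_hom_image_le (s i) (s j)"
  proof (rule strong_hom_image_le_if_nbr_types_dominate[OF split[of i]])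
    show "clique_split (s j) (e j) (m i) (K j)" using split[of j] \<open>m j = m i\<close> by simp
    show "finite (verts (s i))" "finite (verts (s j))" "digraph (s j)"
      using fin by (simp_all add: finite_digraph_def)
    show "(e i k, e i l) \<in> edges (s i) \<longleftrightarrow> (e j k, e j l) \<in> edges (s j)"
      if "k < m i" "l < m i" for k l
    proof -
      have "(k, l) \<in> skeleton i \<longleftrightarrow> (k, l) \<in> skeleton j" using same_skeleton by simp
      then show ?thesis using that \<open>m j = m i\<close> by (simp add: skeleton_def)
    qed
    show "card {v\<in>K i. nbr_type (s i) (e i) (m i) v = t}
        \<le> card {v\<in>K j. nbr_type (s j) (e j) (m i) v = t}"
      if "t \<in> nbr_type (s i) (e i) (m i) ` K i" for t
      using that type_T counts \<open>m j = m i\<close> by (auto simp: type_def)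
    show "nbr_type (s j) (e j) (m i) ` K j \<subseteq> nbr_type (s i) (e i) (m i) ` K i"
      using same_support \<open>m j = m i\<close> by (simp add: type_def)
  qed
  with \<open>i < j\<close> show ?thesis by (rule that)
qed

lemma well_quasi_ordered_on_if_between:
  assumes le_hom: "\<And>A B. le A B \<Longrightarrow> hom_image_le A B"
    and strong_le: "\<And>A B. strong_hom_image_le A B \<Longrightarrow> le A B"
    and C: "\<forall>D\<in>C. finite_digraph D \<and> reflexive_digraph D"
    and bound: "\<forall>D\<in>C. \<forall>P. disjoint_partial_pairs D P \<longrightarrow> card P \<le> N"
  shows "well_quasi_ordered_on le C"
  unfolding well_quasi_ordered_on_def
proof (intro conjI)
  show "\<not> (\<exists>s. (\<forall>i. s i \<in> C) \<and> (\<forall>i. le (s (Suc i)) (s i) \<and> \<not> le (s i) (s (Suc i))))"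
    using no_infinite_descending_chain[where le = le, OF le_hom strong_le] C by blast
  show "\<not> (\<exists>s. (\<forall>i. s i \<in> C) \<and> (\<forall>(i::nat) j. i \<noteq> j \<longrightarrow> \<not> le (s i) (s j)))"
  proof
    assume "\<exists>s. (\<forall>i. s i \<in> C) \<and> (\<forall>(i::nat) j. i \<noteq> j \<longrightarrow> \<not> le (s i) (s j))"
    then obtain s where "\<forall>i. s i \<in> C" and antichain: "\<forall>(i::nat) j. i \<noteq> j \<longrightarrow> \<not> le (s i) (s j)"
      by blast
    then obtain i j where "i < j" "strong_hom_image_le (s i) (s j)"
      using ex_strong_hom_image_le_pair[OF C bound] by blast
    from \<open>strong_hom_image_le (s i) (s j)\<close> have "le (s i) (s j)" by (rule strong_le)
    with antichain \<open>i < j\<close> show False by simp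
  qed
qed

theorem lemma4p5:
  fixes C :: "'a digraph set" and N :: nat
  assumes "\<forall>D\<in>C. finite_digraph D \<and> reflexive_digraph D"
    and "\<forall>D\<in>C. \<forall>P. disjoint_partial_pairs D P \<longrightarrow> card P \<le> N"
  shows "well_quasi_ordered_on hom_image_le C \<and> well_quasi_ordered_on strong_hom_image_le C"
proof
  show "well_quasi_ordered_on hom_image_le C"
    by (rule well_quasi_ordered_on_if_between[OF _ strong_hom_image_le_imp_hom_image_le assms])
  show "well_quasi_ordered_on strong_hom_image_le C"
    by (rule well_quasi_ordered_on_if_between[OF strong_hom_image_le_imp_hom_image_le _ assms])
qed

end
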